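(* Let $n\ge2$. For $Q\in SU_n$ let $m(Q):=\min\{\|X\|_\phi^2: X\in\mathfrak{su}_n,\ \exp(X)=Q\}$ and let $\delta_n:=\max\{m(Q):Q\in SU_n\}$. Then $\delta_n=n\pi^2$ if $n$ is even and $\delta_n=(n-\frac1n)\pi^2$ if $n$ is odd. Moreover, a matrix $Q\in SU_n$ satisfies $m(Q)=\delta_n$ if and only if $Q=-I_n$ when $n$ is even, and if and only if $Q=e^{\frac{(n-1)\pi\mathbf{i}}{n}}I_n$ or $Q=e^{-\frac{(n-1)\pi\mathbf{i}}{n}}I_n$ when $n$ is odd.
   Context: $SU_n$ is the special unitary group, $\mathfrak{su}_n$ its Lie algebra of traceless skew-Hermitian matrices, $\exp$ the matrix exponential, and $\|X\|_\phi=\sqrt{\mathrm{tr}(XX^* )}$ the Frobenius norm. (The minimum defining $m(Q)$ exists, and $m(Q)$ equals the square of the Frobenius-metric distance from $I_n$ to $Q$ in $SU_n$.) *)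

theory Defs
  imports "HOL-Analysis.Analysis"
begin

text \<open>Complex n x n matrices are rendered as complex^'n^'n (n = CARD('n)).
  The norm on this type is the Euclidean norm of all entries, i.e. the Frobenius norm.\<close>

primrec cmatpow :: "complex^'n^'n \<Rightarrow> nat \<Rightarrow> complex^'n^'n" where
  "cmatpow A 0 = mat 1"
| "cmatpow A (Suc k) = cmatpow A k ** A"

definition cmat_exp :: "complex^'n^'n \<Rightarrow> complex^'n^'n" where
  "cmat_exp X = (\<Sum>k. (1 / fact k) *\<^sub>R cmatpow X k)"

definition conj_transpose :: "complex^'n^'n \<Rightarrow> complex^'n^'n" where
  "conj_transpose A = (\<chi> i j. cnj (A $ j $ i))"

definition frob_norm :: "complex^'n^'n \<Rightarrow> real" where
  "frob_norm X = sqrt (cmod (trace (X ** conj_transpose X)))"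

definition SU :: "(complex^'n^'n) set" where
  "SU = {Q. Q ** conj_transpose Q = mat 1 \<and> det Q = 1}"

definition su :: "(complex^'n^'n) set" where
  "su = {X. conj_transpose X = - X \<and> trace X = 0}"

definition m_SU :: "complex^'n^'n \<Rightarrow> real" where
  "m_SU Q = Inf {(frob_norm X)^2 | X. X \<in> su \<and> cmat_exp X = Q}"

definition delta_SU :: "'n::finite itself \<Rightarrow> real" where
  "delta_SU _ = Sup {m_SU Q | Q :: complex^'n^'n. Q \<in> SU}"

end

theory Submission
  imports Defs
begin

text \<open>Every \<open>X \<in> su\<^sub>n\<close> is unitarily diagonalisable, \<open>X = U diag(\<i>\<theta>\<^sub>1, \<dots>, \<i>\<theta>\<^sub>n) U\<^sup>*\<close> with
  \<open>\<Sum>\<^sub>j \<theta>\<^sub>j = 0\<close>, so that \<open>\<parallel>X\<parallel>\<^sup>2 = \<Sum>\<^sub>j \<theta>\<^sub>j\<^sup>2\<close> and \<open>exp X = U diag(exp(\<i>\<theta>\<^sub>j)) U\<^sup>*\<close>.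
  For \<open>Q \<in> SU\<^sub>n\<close> take the angles of its eigenvalues with \<open>\<Sum>\<^sub>j \<theta>\<^sub>j = 0\<close> minimising \<open>\<Sum>\<^sub>j \<theta>\<^sub>j\<^sup>2\<close>.
  Then \<open>max \<theta> - min \<theta> \<le> 2\<pi>\<close>, since moving \<open>2\<pi>\<close> from the largest to the smallest angle would
  decrease the sum. After a common shift all angles lie in \<open>[-\<pi>, \<pi>]\<close>, and
  \<open>\<Sum>\<^sub>j \<theta>\<^sub>j\<^sup>2 = \<Sum>\<^sub>j v\<^sub>j\<^sup>2 - (\<Sum>\<^sub>j v\<^sub>j)\<^sup>2/n \<le> n\<pi>\<^sup>2\<close>, improved to \<open>(n - 1/n)\<pi>\<^sup>2\<close> for odd \<open>n\<close>,
  where the values \<open>\<plusminus>\<pi>\<close> cannot balance. Conversely, every logarithm \<open>X\<close> of \<open>exp(\<i>(\<pi> - c)) I\<close>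
  has \<open>(\<theta>\<^sub>j + c)\<^sup>2 \<ge> \<pi>\<^sup>2\<close> for all \<open>j\<close>, hence \<open>\<parallel>X\<parallel>\<^sup>2 \<ge> n\<pi>\<^sup>2 - nc\<^sup>2\<close>; for \<open>c = 0\<close> (\<open>n\<close> even)
  and \<open>c = \<plusminus>\<pi>/n\<close> (\<open>n\<close> odd) this meets the upper bound, and the equality cases of the upper
  bound force \<open>Q\<close> to be one of these scalars.\<close>

section \<open>Conjugate transpose, diagonal and unitary matrices\<close>

lemma conj_transpose_nth [simp]: "conj_transpose A $ i $ j = cnj (A $ j $ i)"
  by (simp add: conj_transpose_def)

lemma conj_transpose_conj_transpose [simp]: "conj_transpose (conj_transpose A) = A"
  by (simp add: vec_eq_iff)

lemma conj_transpose_mult: "conj_transpose (A ** B) = conj_transpose B ** conj_transpose A"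
  by (simp add: vec_eq_iff matrix_matrix_mult_def mult.commute)

lemma matrix_add_rdistrib: "(B + C) ** A = B ** A + C ** (A :: 'a::semiring_1^'n^'m)"
  by (vector matrix_matrix_mult_def sum.distrib[symmetric] distrib_right)

lemma matrix_diff_ldistrib: "A ** (B - C) = A ** B - A ** (C :: 'a::ring_1^'n^'m)"
  by (vector matrix_matrix_mult_def sum_subtractf[symmetric] right_diff_distrib)

lemma matrix_diff_rdistrib: "(B - C) ** A = B ** A - C ** (A :: 'a::ring_1^'n^'m)"
  by (vector matrix_matrix_mult_def sum_subtractf[symmetric] left_diff_distrib)

lemma matrix_mul_uminus_right: "A ** (- B) = - (A ** (B :: 'a::ring_1^'n^'m))"
  by (simp add: vec_eq_iff matrix_matrix_mult_def sum_negf)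

lemma matrix_mul_uminus_left: "(- A) ** B = - (A ** (B :: 'a::ring_1^'n^'m))"
  by (simp add: vec_eq_iff matrix_matrix_mult_def sum_negf)

lemma mat_matrix_mult: "mat c ** A = (\<chi> i j. c * A $ i $ j)"
  by (simp add: vec_eq_iff matrix_matrix_mult_def mat_def mult_delta_left mult_delta_right)

lemma matrix_mat_mult: "A ** mat c = (\<chi> i j. A $ i $ j * (c :: 'a::semiring_1))"
  by (simp add: vec_eq_iff matrix_matrix_mult_def mat_def mult_delta_left mult_delta_right)

lemma mat_matrix_vector_mult: "mat c *v x = c *s (x :: 'a::semiring_1^'n)"
  by (simp add: vec_eq_iff matrix_vector_mult_def mat_def mult_delta_left)

lemma mat_matrix_mult_commute: "mat c ** A = A ** mat (c :: 'a::comm_semiring_1)"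
  by (simp add: mat_matrix_mult matrix_mat_mult mult.commute)

definition diag_mat :: "('n::finite \<Rightarrow> 'a::zero) \<Rightarrow> 'a^'n^'n" where
  "diag_mat d = (\<chi> i j. if i = j then d i else 0)"

lemma diag_mat_nth [simp]: "diag_mat d $ i $ j = (if i = j then d i else 0)"
  by (simp add: diag_mat_def)

lemma diag_mat_mult: "diag_mat d ** diag_mat e = diag_mat (\<lambda>i. d i * (e i :: 'a::semiring_1))"
  by (simp add: vec_eq_iff matrix_matrix_mult_def mult_delta_left mult_delta_right)

lemma diag_mat_const: "diag_mat (\<lambda>_. c) = mat c"
  by (simp add: vec_eq_iff mat_def)

lemma diag_mat_uminus: "diag_mat (\<lambda>i. - d i) = - diag_mat (d :: 'n::finite \<Rightarrow> 'a::ab_group_add)"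
  by (simp add: vec_eq_iff)

lemma diag_mat_eq_mat_iff: "diag_mat d = mat c \<longleftrightarrow> (\<forall>i. d i = c)"
  by (auto simp: vec_eq_iff mat_def)

lemma trace_diag_mat: "trace (diag_mat d) = (\<Sum>i\<in>UNIV. d i)"
  by (simp add: trace_def)

lemma det_diag_mat: "det (diag_mat d) = (\<Prod>i\<in>UNIV. (d i :: 'a::comm_ring_1))"
  by (subst det_diagonal) auto

lemma conj_transpose_diag_mat: "conj_transpose (diag_mat d) = diag_mat (\<lambda>i. cnj (d i))"
  by (simp add: vec_eq_iff)

lemma cmatpow_diag_mat: "cmatpow (diag_mat d) k = diag_mat (\<lambda>i. d i ^ k)"
  by (induction k) (simp_all add: diag_mat_const diag_mat_mult mult.commute)

lemma cmat_exp_series_diag_mat_sums: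
  "(\<lambda>k. (1 / fact k) *\<^sub>R cmatpow (diag_mat d) k) sums diag_mat (\<lambda>i. exp (d i))"
proof -
  have "(\<lambda>N. \<Sum>k<N. (1 / fact k) *\<^sub>R cmatpow (diag_mat d) k)
      = (\<lambda>N. \<chi> i j. if i = j then \<Sum>k<N. d i ^ k /\<^sub>R fact k else 0)"
    by (auto simp: vec_eq_iff cmatpow_diag_mat divide_inverse_commute)
  moreover have "(\<lambda>k. d i ^ k /\<^sub>R fact k) sums exp (d i)" for i
    by (simp add: exp_def summable_exp_generic summable_sums)
  ultimately show ?thesis
    unfolding sums_def diag_mat_def
    by (auto intro!: tendsto_vec_lambda simp: sums_def)
qed

definition unitary :: "complex^'n^'n \<Rightarrow> bool" where
  "unitary U \<longleftrightarrow> conj_transpose U ** U = mat 1 \<and> U ** conj_transpose U = mat 1"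

lemma unitaryI: "conj_transpose U ** U = mat 1 \<Longrightarrow> unitary U"
  using matrix_left_right_inverse unitary_def by blast

lemma unitary_conj_mult:
  "unitary U \<Longrightarrow> (U ** A ** conj_transpose U) ** (U ** B ** conj_transpose U)
     = U ** (A ** B) ** conj_transpose U"
  by (simp add: unitary_def matrix_mul_assoc) (metis matrix_mul_assoc matrix_mul_rid)

lemma unitary_conj_cancel: "unitary U \<Longrightarrow> conj_transpose U ** (U ** A ** conj_transpose U) ** U = A"
  by (simp add: unitary_def matrix_mul_assoc) (metis matrix_mul_assoc matrix_mul_rid)

lemma unitary_conj_inject:
  "unitary U \<Longrightarrow> U ** A ** conj_transpose U = U ** B ** conj_transpose U \<Longrightarrow> A = B"
  by (metis unitary_conj_cancel)

lemma unitary_conj_mat: "unitary U \<Longrightarrow> U ** mat c ** conj_transpose U = mat c"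
  by (simp add: unitary_def mat_matrix_mult_commute[symmetric] matrix_mul_assoc)
     (metis matrix_mul_assoc matrix_mul_rid)

lemma unitary_conj_eq_mat_iff: "unitary U \<Longrightarrow> U ** A ** conj_transpose U = mat c \<longleftrightarrow> A = mat c"
  by (metis unitary_conj_cancel unitary_conj_mat unitary_def conj_transpose_conj_transpose)

lemma trace_unitary_conj: "unitary U \<Longrightarrow> trace (U ** A ** conj_transpose U) = trace A"
  by (metis matrix_mul_assoc matrix_mul_lid trace_mul_sym unitary_def)

lemma conj_transpose_unitary_conj:
  "conj_transpose (U ** A ** conj_transpose U) = U ** conj_transpose A ** conj_transpose U"
  by (simp add: conj_transpose_mult matrix_mul_assoc)

lemma cmatpow_unitary_conj:
  assumes "unitary U"
  shows "cmatpow (U ** A ** conj_transpose U) k = U ** cmatpow A k ** conj_transpose U"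
  by (induction k) (use assms in \<open>simp_all add: unitary_def unitary_conj_mult\<close>)

lemma cmat_exp_unitary_conj_diag_mat:
  fixes U :: "complex^'n^'n"
  assumes "unitary U"
  shows "cmat_exp (U ** diag_mat d ** conj_transpose U) = U ** diag_mat (\<lambda>i. exp (d i)) ** conj_transpose U"
proof -
  have "bounded_linear (\<lambda>A::complex^'n^'n. U ** A ** conj_transpose U)"
    by (auto intro!: linearI simp: linear_conv_bounded_linear[symmetric] matrix_add_ldistrib
        matrix_add_rdistrib matrix_scalar_ac scalar_matrix_assoc)
  from bounded_linear.sums[OF this cmat_exp_series_diag_mat_sums]
  show ?thesis
    unfolding cmat_exp_def
    by (simp add: cmatpow_unitary_conj[OF assms] matrix_scalar_ac scalar_matrix_assoc sums_iff)
qed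

section \<open>Hermitian matrices and their eigenvectors\<close>

definition hermitian :: "complex^'n^'n \<Rightarrow> bool" where
  "hermitian H \<longleftrightarrow> conj_transpose H = H"

definition cinner :: "complex^'n \<Rightarrow> complex^'n \<Rightarrow> complex" where
  "cinner x y = (\<Sum>i\<in>UNIV. cnj (x $ i) * y $ i)"

lemma cinner_add_right: "cinner x (y + z) = cinner x y + cinner x z"
  by (simp add: cinner_def distrib_left sum.distrib)

lemma cinner_diff_right: "cinner x (y - z) = cinner x y - cinner x z"
  by (simp add: cinner_def right_diff_distrib sum_subtractf)

lemma cinner_diff_left: "cinner (x - y) z = cinner x z - cinner y z"
  by (simp add: cinner_def left_diff_distrib sum_subtractf)

lemma cinner_smult_right: "cinner x (c *s y) = c * cinner x y"
  by (simp add: cinner_def sum_distrib_left mult.left_commute)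

lemma cinner_smult_left: "cinner (c *s x) y = cnj c * cinner x y"
  by (simp add: cinner_def sum_distrib_left mult.assoc)

lemma cinner_sum_right: "cinner x (\<Sum>s\<in>S. f s) = (\<Sum>s\<in>S. cinner x (f s))"
  by (simp add: cinner_def sum_distrib_left sum_component) (rule sum.swap)

lemma cinner_zero_right [simp]: "cinner x 0 = 0"
  by (simp add: cinner_def)

lemma cinner_commute: "cinner y x = cnj (cinner x y)"
  by (simp add: cinner_def mult.commute)

lemma cinner_matrix_vector_mult: "cinner x (A *v y) = cinner (conj_transpose A *v x) y"
  by (simp add: cinner_def matrix_vector_mult_def sum_distrib_left sum_distrib_right mult_ac)
     (rule sum.swap)

lemma cinner_self: "cinner x x = complex_of_real ((norm x)^2)"
proof -
  have "cinner x x = (\<Sum>i\<in>UNIV. complex_of_real ((cmod (x $ i))^2))"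
    unfolding cinner_def by (intro sum.cong) (simp_all del: of_real_power add: complex_norm_square mult.commute)
  then show ?thesis
    by (simp add: norm_vec_def L2_set_def sum_nonneg)
qed

lemma Re_cinner: "Re (cinner x y) = inner x y"
  by (simp add: cinner_def inner_vec_def inner_complex_def)

lemma scaleR_eq_smult: "r *\<^sub>R x = complex_of_real r *s (x :: complex^'n)"
  unfolding vec_eq_iff vector_scaleR_component vector_smult_component by (simp add: scaleR_conv_of_real)

definition complex_subspace :: "(complex^'n) set \<Rightarrow> bool" where
  "complex_subspace W \<longleftrightarrow> 0 \<in> W \<and> (\<forall>x\<in>W. \<forall>y\<in>W. x + y \<in> W) \<and> (\<forall>x\<in>W. \<forall>c. c *s x \<in> W)"

lemma complex_subspace_smult: "complex_subspace W \<Longrightarrow> x \<in> W \<Longrightarrow> c *s x \<in> W"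
  by (simp add: complex_subspace_def)

lemma complex_subspace_diff:
  assumes "complex_subspace W" "x \<in> W" "y \<in> W"
  shows "x - y \<in> W"
proof -
  have "x + (-1) *s y \<in> W" using assms unfolding complex_subspace_def by blast
  moreover have "x + (-1) *s y = x - y" by (simp add: vec_eq_iff)
  ultimately show ?thesis by simp
qed

lemma closed_complex_subspace: "complex_subspace W \<Longrightarrow> closed W"
  by (intro closed_subspace) (auto simp: complex_subspace_def subspace_def scaleR_eq_smult)

text \<open>Moving from \<open>x\<close> a little in the direction \<open>-M x\<close> would otherwise make the form
  negative.\<close>

lemma hermitian_form_zero_imp_kernel:
  fixes M :: "complex^'n^'n"
  assumes "hermitian M" and W: "complex_subspace W" and "x \<in> W" "M *v x \<in> W"
    and nonneg: "\<And>y. y \<in> W \<Longrightarrow> 0 \<le> Re (cinner y (M *v y))"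
    and zero: "Re (cinner x (M *v x)) = 0"
  shows "M *v x = 0"
proof (rule ccontr)
  define z where "z = M *v x"
  define a where "a = (norm z)^2"
  define b where "b = Re (cinner z (M *v z))"
  assume "M *v x \<noteq> 0"
  then have "0 < a" by (simp add: a_def z_def)
  have "0 \<le> b" using nonneg \<open>M *v x \<in> W\<close> by (simp add: b_def z_def)
  have xMz: "cinner x (M *v z) = complex_of_real a"
    using \<open>hermitian M\<close> by (simp add: cinner_matrix_vector_mult hermitian_def cinner_self a_def z_def)
  have form: "Re (cinner (x - of_real t *s z) (M *v (x - of_real t *s z))) = t^2 * b - 2 * t * a" for t
    using zero xMz
    by (simp add: z_def[symmetric] matrix_vector_mult_diff_distrib vector_scalar_commute
        cinner_diff_left cinner_diff_right cinner_smult_left cinner_smult_right cinner_self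
        a_def b_def power2_eq_square algebra_simps)
  define t where "t = a / (b + 1)"
  have "0 < t" using \<open>0 < a\<close> \<open>0 \<le> b\<close> by (simp add: t_def)
  have "x - of_real t *s z \<in> W"
    using W \<open>x \<in> W\<close> \<open>M *v x \<in> W\<close> by (simp add: z_def complex_subspace_diff complex_subspace_smult)
  then have "0 \<le> t^2 * b - 2 * t * a"
    using nonneg form[of t] by fastforce
  then have "0 \<le> t * (t * b - 2 * a)"
    by (simp add: power2_eq_square algebra_simps)
  moreover have "t * b < 2 * a"
  proof -
    have "0 \<le> a * b" using \<open>0 < a\<close> \<open>0 \<le> b\<close> by simp
    then show ?thesis using \<open>0 < a\<close> \<open>0 \<le> b\<close> by (simp add: t_def field_simps, linarith)
  qed
  ultimately show False
    using \<open>0 < t\<close> by (simp add: zero_le_mult_iff)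
qed

lemma quadratic_form_attains_max:
  fixes H :: "complex^'n^'n"
  assumes W: "complex_subspace W" "x0 \<in> W" "x0 \<noteq> 0"
  obtains x1 where "x1 \<in> W" "norm x1 = 1"
    "\<And>y. y \<in> W \<Longrightarrow> Re (cinner y (H *v y)) \<le> Re (cinner x1 (H *v x1)) * (norm y)^2"
proof -
  define f where "f x = Re (cinner x (H *v x))" for x
  define K where "K = sphere (0::complex^'n) 1 \<inter> W"
  have normalize: "(1 / norm y) *\<^sub>R y \<in> K" if "y \<in> W" "y \<noteq> 0" for y
  proof -
    have "(1 / norm y) *\<^sub>R y \<in> W"
      using that W by (simp only: scaleR_eq_smult complex_subspace_smult)
    then show ?thesis using that by (simp add: K_def)
  qed
  have "compact K"
    unfolding K_def using closed_complex_subspace[OF W(1)] by (intro compact_Int_closed) auto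
  moreover have "K \<noteq> {}" using normalize W by blast
  moreover have "continuous_on K f"
    unfolding f_def cinner_def matrix_vector_mult_def by (intro continuous_intros)
  ultimately obtain x1 where "x1 \<in> K" and max: "\<And>y. y \<in> K \<Longrightarrow> f y \<le> f x1"
    using continuous_attains_sup by metis
  have f_scaleR: "f (r *\<^sub>R y) = r^2 * f y" for r y
    by (simp add: f_def scaleR_eq_smult vector_scalar_commute cinner_smult_left cinner_smult_right
        power2_eq_square)
  have "f y \<le> f x1 * (norm y)^2" if "y \<in> W" for y
  proof (cases "y = 0")
    case False
    then have "f y / (norm y)^2 \<le> f x1"
      using max[OF normalize[OF that False]] by (simp add: f_scaleR power_divide)
    then show ?thesis using False by (simp add: divide_le_eq)
  qed (simp add: f_def cinner_def)
  then show ?thesis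
    using that \<open>x1 \<in> K\<close> by (auto simp: K_def f_def)
qed

text \<open>The maximum \<open>l\<close> of the Rayleigh quotient on \<open>W\<close> is an eigenvalue, since
  \<open>l I - H\<close> is positive semidefinite on \<open>W\<close> and its form vanishes at a maximiser.\<close>

lemma hermitian_eigenvector_in_invariant_subspace:
  fixes H :: "complex^'n^'n"
  assumes "hermitian H" and W: "complex_subspace W" "x0 \<in> W" "x0 \<noteq> 0"
    and inv: "\<And>x. x \<in> W \<Longrightarrow> H *v x \<in> W"
  shows "\<exists>x\<in>W. x \<noteq> 0 \<and> (\<exists>l::real. H *v x = of_real l *s x)"
proof -
  obtain x1 where "x1 \<in> W" "norm x1 = 1"
    and max: "\<And>y. y \<in> W \<Longrightarrow> Re (cinner y (H *v y)) \<le> Re (cinner x1 (H *v x1)) * (norm y)^2"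
    using quadratic_form_attains_max[OF W] by blast
  define l where "l = Re (cinner x1 (H *v x1))"
  define M where "M = mat (of_real l) - H"
  have Mv: "M *v y = of_real l *s y - H *v y" for y
    unfolding M_def matrix_vector_mult_diff_rdistrib mat_matrix_vector_mult ..
  have form: "Re (cinner y (M *v y)) = l * (norm y)^2 - Re (cinner y (H *v y))" for y
    by (simp add: Mv cinner_diff_right cinner_smult_right cinner_self)
  have "M *v x1 = 0"
  proof (rule hermitian_form_zero_imp_kernel[OF _ W(1) \<open>x1 \<in> W\<close>])
    show "hermitian M"
      using \<open>hermitian H\<close> by (simp add: hermitian_def M_def vec_eq_iff mat_def)
    show "M *v x1 \<in> W"
      using W(1) inv \<open>x1 \<in> W\<close> by (simp add: Mv complex_subspace_diff complex_subspace_smult)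
  qed (use max \<open>norm x1 = 1\<close> in \<open>simp_all add: form l_def\<close>)
  then show ?thesis
    using \<open>x1 \<in> W\<close> \<open>norm x1 = 1\<close> by (intro bexI[of _ x1]) (auto simp: Mv intro!: exI[of _ l])
qed

section \<open>Spectral theorem for normal matrices\<close>

definition orthonormal :: "(complex^'n) set \<Rightarrow> bool" where
  "orthonormal S \<longleftrightarrow> (\<forall>s\<in>S. \<forall>t\<in>S. cinner s t = (if s = t then 1 else 0))"

definition joint_eigenvector :: "complex^'n^'n \<Rightarrow> complex^'n^'n \<Rightarrow> complex^'n \<Rightarrow> bool" where
  "joint_eigenvector A B x \<longleftrightarrow> (\<exists>a. A *v x = a *s x) \<and> (\<exists>b. B *v x = b *s x)"

lemma orthonormalD: "orthonormal S \<Longrightarrow> s \<in> S \<Longrightarrow> t \<in> S \<Longrightarrow> cinner s t = (if s = t then 1 else 0)"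
  by (simp add: orthonormal_def)

lemma orthonormal_finite_card_le:
  fixes S :: "(complex^'n) set"
  assumes "orthonormal S"
  shows "finite S \<and> card S \<le> DIM(complex^'n)"
proof -
  have "inner x y = 0" if "x \<in> S" "y \<in> S" "x \<noteq> y" for x y
  proof -
    have "cinner x y = 0" using orthonormalD[OF assms] that by simp
    then show ?thesis by (simp flip: Re_cinner)
  qed
  then have "pairwise orthogonal S"
    by (simp add: pairwise_def orthogonal_def)
  moreover have "0 \<notin> S"
  proof
    assume "0 \<in> S"
    then show False
      using orthonormalD[OF assms, of 0 0] by simp
  qed
  ultimately have "independent S"
    by (rule pairwise_orthogonal_independent)
  then show ?thesis
    using independent_bound[of S] by simp
qed

lemma cinner_orthonormal_expansion_residual:
  assumes "orthonormal S" "finite S" "t \<in> S"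
  shows "cinner t (x - (\<Sum>s\<in>S. cinner s x *s s)) = 0"
proof -
  have "cinner t (\<Sum>s\<in>S. cinner s x *s s) = (\<Sum>s\<in>S. if s = t then cinner t x else 0)"
    unfolding cinner_sum_right cinner_smult_right
  proof (rule sum.cong)
    fix s assume "s \<in> S"
    then show "cinner s x * cinner t s = (if s = t then cinner t x else 0)"
      using orthonormalD[OF assms(1) assms(3) \<open>s \<in> S\<close>] by simp
  qed simp
  then show ?thesis
    using assms(2,3) by (simp add: cinner_diff_right)
qed

lemma card_orthonormal_spanning:
  fixes S :: "(complex^'n) set"
  assumes "orthonormal S" "finite S" and span: "\<And>x. x = (\<Sum>s\<in>S. cinner s x *s s)"
  shows "card S = CARD('n)"
proof -
  have diag: "1 = (\<Sum>s\<in>S. cnj (s $ j) * s $ j)" for j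
  proof -
    have "axis j 1 $ j = (\<Sum>s\<in>S. cinner s (axis j 1) *s s) $ j"
      using span by metis
    then show ?thesis
      by (simp add: cinner_def axis_def mult_delta_right sum_component)
  qed
  have "of_nat CARD('n) = (\<Sum>j\<in>(UNIV::'n set). \<Sum>s\<in>S. cnj (s $ j) * s $ j)"
    by (simp flip: diag)
  also have "\<dots> = (\<Sum>s\<in>S. cinner s s)"
    unfolding cinner_def by (rule sum.swap)
  also have "\<dots> = of_nat (card S)"
    using assms(1) by (simp add: orthonormal_def)
  finally show ?thesis
    by (metis of_nat_eq_iff)
qed

lemma orthogonal_complement_invariant:
  assumes "hermitian H" and eig: "\<And>s. s \<in> S \<Longrightarrow> \<exists>a. H *v s = a *s s"
    and "\<forall>s\<in>S. cinner s w = 0"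
  shows "\<forall>s\<in>S. cinner s (H *v w) = 0"
proof
  fix s assume "s \<in> S"
  with eig obtain a where "H *v s = a *s s" by blast
  then show "cinner s (H *v w) = 0"
    using assms(1,3) \<open>s \<in> S\<close>
    by (simp add: cinner_matrix_vector_mult hermitian_def cinner_smult_left)
qed

lemma commuting_hermitian_joint_eigenvector:
  assumes "hermitian A" "hermitian B" "A ** B = B ** A"
    and W: "complex_subspace W" "x0 \<in> W" "x0 \<noteq> 0"
    and inv: "\<And>x. x \<in> W \<Longrightarrow> A *v x \<in> W" "\<And>x. x \<in> W \<Longrightarrow> B *v x \<in> W"
  shows "\<exists>u\<in>W. cinner u u = 1 \<and> joint_eigenvector A B u"
proof -
  obtain x1 a where "x1 \<in> W" "x1 \<noteq> 0" and a: "A *v x1 = of_real a *s x1"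
    using hermitian_eigenvector_in_invariant_subspace[OF assms(1) W inv(1)] by blast
  define V where "V = {v \<in> W. A *v v = of_real a *s v}"
  have "A *v (c *s v) = of_real a *s (c *s v)" if "v \<in> V" for c v
    using that by (simp add: V_def vector_scalar_commute vector_smult_assoc mult.commute)
  then have V: "complex_subspace V"
    using W(1) unfolding complex_subspace_def V_def
    by (simp add: matrix_vector_right_distrib vector_add_ldistrib)
  have "x1 \<in> V" using \<open>x1 \<in> W\<close> a by (simp add: V_def)
  have inv_V: "B *v v \<in> V" if "v \<in> V" for v
  proof -
    have "A *v (B *v v) = B *v (A *v v)"
      by (simp add: matrix_vector_mul_assoc assms(3))
    also have "\<dots> = of_real a *s (B *v v)"
      using that by (simp add: V_def vector_scalar_commute)
    finally show ?thesis
      using inv(2) that by (simp add: V_def)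
  qed
  obtain x2 b where "x2 \<in> V" "x2 \<noteq> 0" and b: "B *v x2 = of_real b *s x2"
    using hermitian_eigenvector_in_invariant_subspace[OF assms(2) V \<open>x1 \<in> V\<close> \<open>x1 \<noteq> 0\<close> inv_V] by blast
  define u where "u = of_real (1 / norm x2) *s x2"
  have "u \<in> V"
    using V \<open>x2 \<in> V\<close> by (simp add: u_def complex_subspace_smult)
  have "cinner u u = 1"
    unfolding u_def cinner_smult_left cinner_smult_right
    using \<open>x2 \<noteq> 0\<close> by (simp add: cinner_self power2_eq_square)
  moreover have "joint_eigenvector A B u"
    using \<open>u \<in> V\<close> b
    by (auto simp: joint_eigenvector_def V_def u_def vector_scalar_commute vector_smult_assoc
        mult.commute)
  ultimately show ?thesis
    using \<open>u \<in> V\<close> by (auto simp: V_def)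
qed

text \<open>Otherwise the orthogonal complement of \<open>S\<close>, which both matrices leave invariant, would
  contain a further joint eigenvector.\<close>

lemma maximal_orthonormal_joint_eigenvectors_span:
  assumes "hermitian A" "hermitian B" "A ** B = B ** A"
    and S: "orthonormal S" "finite S" "\<And>s. s \<in> S \<Longrightarrow> joint_eigenvector A B s"
    and maximal: "\<And>u. u \<notin> S \<Longrightarrow> orthonormal (insert u S) \<Longrightarrow> \<not> joint_eigenvector A B u"
  shows "x = (\<Sum>s\<in>S. cinner s x *s s)"
proof (rule ccontr)
  define W where "W = {w. \<forall>s\<in>S. cinner s w = 0}"
  define y where "y = x - (\<Sum>s\<in>S. cinner s x *s s)"
  assume "x \<noteq> (\<Sum>s\<in>S. cinner s x *s s)"
  then have "y \<noteq> 0" by (simp add: y_def)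
  have "y \<in> W"
    using cinner_orthonormal_expansion_residual[OF S(1,2)] by (simp add: W_def y_def)
  have "complex_subspace W"
    by (simp add: complex_subspace_def W_def cinner_add_right cinner_smult_right)
  have "\<exists>a. A *v s = a *s s" "\<exists>b. B *v s = b *s s" if "s \<in> S" for s
    using S(3)[OF that] unfolding joint_eigenvector_def by blast+
  then have "A *v w \<in> W" "B *v w \<in> W" if "w \<in> W" for w
    using orthogonal_complement_invariant[OF assms(1), of S w]
      orthogonal_complement_invariant[OF assms(2), of S w] that
    unfolding W_def by simp_all
  then obtain u where "u \<in> W" "cinner u u = 1" "joint_eigenvector A B u"
    using commuting_hermitian_joint_eigenvector[OF assms(1-3) \<open>complex_subspace W\<close> \<open>y \<in> W\<close> \<open>y \<noteq> 0\<close>]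
    by blast
  have "u \<notin> S"
    using \<open>u \<in> W\<close> \<open>cinner u u = 1\<close> by (auto simp: W_def)
  have "cinner s u = 0" "cinner u s = 0" if "s \<in> S" for s
    using \<open>u \<in> W\<close> that cinner_commute[of u s] by (auto simp: W_def)
  then have "orthonormal (insert u S)"
    using S(1) \<open>cinner u u = 1\<close> \<open>u \<notin> S\<close> by (auto simp: orthonormal_def)
  then show False
    using maximal \<open>u \<notin> S\<close> \<open>joint_eigenvector A B u\<close> by blast
qed

lemma commuting_hermitian_orthonormal_eigenbasis:
  fixes A B :: "complex^'n^'n"
  assumes "hermitian A" "hermitian B" "A ** B = B ** A"
  obtains S where "orthonormal S" "finite S" "card S = CARD('n)"
    "\<And>s. s \<in> S \<Longrightarrow> joint_eigenvector A B s"
proof -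
  define P where "P S \<longleftrightarrow> orthonormal S \<and> (\<forall>s\<in>S. joint_eigenvector A B s)"
    for S :: "(complex^'n) set"
  have "\<exists>S. P S \<and> card S = 0"
    by (auto simp: P_def orthonormal_def intro!: exI[of _ "{}"])
  moreover have "\<forall>k. (\<exists>S. P S \<and> card S = k) \<longrightarrow> k \<le> DIM(complex^'n)"
    using orthonormal_finite_card_le unfolding P_def by blast
  ultimately obtain k where "\<exists>S. P S \<and> card S = k" and "\<forall>k'. (\<exists>S. P S \<and> card S = k') \<longrightarrow> k' \<le> k"
    by (rule Nat.ex_has_greatest_nat[THEN exE]) blast
  then obtain S where "P S" and S_max: "\<And>S'. P S' \<Longrightarrow> card S' \<le> card S"
    by blast
  then have S: "orthonormal S" "finite S" "\<And>s. s \<in> S \<Longrightarrow> joint_eigenvector A B s"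
    using orthonormal_finite_card_le unfolding P_def by blast+
  have "\<not> joint_eigenvector A B u" if "u \<notin> S" "orthonormal (insert u S)" for u
  proof
    assume "joint_eigenvector A B u"
    then have "card (insert u S) \<le> card S"
      using S_max S(3) that(2) by (auto simp: P_def)
    then show False
      using that(1) S(2) by simp
  qed
  then have "card S = CARD('n)"
    using card_orthonormal_spanning[OF S(1,2)] maximal_orthonormal_joint_eigenvectors_span[OF assms S]
    by blast
  then show ?thesis
    using that S by blast
qed

lemma conj_transpose_mult_nth: "(conj_transpose U ** V) $ i $ j = cinner (column i U) (column j V)"
  by (simp add: matrix_matrix_mult_def column_def cinner_def)

lemma unitary_of_orthonormal_columns:
  assumes "\<And>i j. cinner (column i U) (column j U) = (if i = j then 1 else 0)"
  shows "unitary U"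
  by (rule unitaryI) (simp add: vec_eq_iff conj_transpose_mult_nth assms mat_def)

lemma exists_unitary_columns_in_orthonormal_basis:
  fixes S :: "(complex^'n) set"
  assumes "orthonormal S" "finite S" "card S = CARD('n)"
  obtains U where "unitary U" "\<And>j. column j U \<in> S"
proof -
  obtain g where g: "bij_betw g (UNIV :: 'n set) S"
    using finite_same_card_bij[of "UNIV :: 'n set" S] assms by auto
  define U :: "complex^'n^'n" where "U = (\<chi> i j. g j $ i)"
  have col: "column j U = g j" for j
    by (simp add: U_def column_def vec_eq_iff)
  have "unitary U"
    using assms(1) g by (intro unitary_of_orthonormal_columns)
      (auto simp: col orthonormal_def bij_betw_def inj_on_def)
  moreover have "column j U \<in> S" for j
    using g by (simp add: col bij_betwE)
  ultimately show ?thesis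
    using that by blast
qed

lemma unitary_diag_of_eigen_columns:
  assumes "unitary U" and eig: "\<And>j. A *v column j U = d j *s column j U"
  shows "A = U ** diag_mat d ** conj_transpose U"
proof -
  have "A ** U = U ** diag_mat d"
    using eig by (simp add: vec_eq_iff matrix_matrix_mult_def matrix_vector_mult_def column_def
        mult_delta_right mult.commute)
  then have "A ** U ** conj_transpose U = U ** diag_mat d ** conj_transpose U"
    by simp
  then show ?thesis
    using assms(1) by (simp add: unitary_def flip: matrix_mul_assoc)
qed

text \<open>\<open>A = (H + \<i> K) / 2\<close> with commuting Hermitian \<open>H = A + A\<^sup>*\<close> and \<open>K = \<i> (A\<^sup>* - A)\<close>, which
  are diagonalised simultaneously.\<close>

theorem normal_unitary_diag:
  fixes A :: "complex^'n^'n"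
  assumes normal: "A ** conj_transpose A = conj_transpose A ** A"
  obtains U d where "unitary U" "A = U ** diag_mat d ** conj_transpose U"
proof -
  define H where "H = A + conj_transpose A"
  define K where "K = mat \<i> ** (conj_transpose A - A)"
  have "hermitian H" "hermitian K"
    by (simp_all add: hermitian_def H_def K_def mat_matrix_mult vec_eq_iff right_diff_distrib)
  have "H ** (conj_transpose A - A) = (conj_transpose A - A) ** H"
    by (simp add: H_def matrix_add_ldistrib matrix_diff_ldistrib matrix_add_rdistrib
        matrix_diff_rdistrib normal algebra_simps)
  then have "H ** K = K ** H"
    unfolding K_def by (metis matrix_mul_assoc mat_matrix_mult_commute)
  then obtain S where S: "orthonormal S" "finite S" "card S = CARD('n)"
    and eig: "\<And>s. s \<in> S \<Longrightarrow> joint_eigenvector H K s"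
    using commuting_hermitian_orthonormal_eigenbasis \<open>hermitian H\<close> \<open>hermitian K\<close> by metis
  obtain U where "unitary U" and col: "\<And>j. column j U \<in> S"
    using exists_unitary_columns_in_orthonormal_basis[OF S] by blast
  have A_HK: "2 *s (A *v x) = H *v x + \<i> *s (K *v x)" for x
    by (simp add: H_def K_def matrix_vector_mult_add_rdistrib matrix_vector_mult_diff_rdistrib
        matrix_vector_mul_assoc[symmetric] mat_matrix_vector_mult vec_eq_iff algebra_simps)
  have "\<exists>c. A *v s = c *s s" if s: "s \<in> S" for s
  proof -
    obtain a b where "H *v s = a *s s" "K *v s = b *s s"
      using eig[OF s] by (auto simp: joint_eigenvector_def)
    then have "2 *s (A *v s) = (a + \<i> * b) *s s"
      by (simp add: A_HK vec_eq_iff algebra_simps)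
    then have "A *v s = ((a + \<i> * b) / 2) *s s"
      by (simp add: vec_eq_iff field_simps)
    then show ?thesis ..
  qed
  then have "\<forall>j. \<exists>c. A *v column j U = c *s column j U"
    using col by blast
  then obtain d where "\<And>j. A *v column j U = d j *s column j U"
    by metis
  then have "A = U ** diag_mat d ** conj_transpose U"
    by (rule unitary_diag_of_eigen_columns[OF \<open>unitary U\<close>])
  with \<open>unitary U\<close> show ?thesis
    by (rule that)
qed

section \<open>Sums of squares of angles\<close>

lemma cis_eq_minus_one_imp_pi_sq_le:
  assumes "cis t = -1"
  shows "pi^2 \<le> t^2"
proof -
  have "cos t = -1"
    using arg_cong[OF assms, of Re] by simp
  then obtain k :: int where k: "t = (2 * of_int k + 1) * pi"
    using cos_eq_minus1 by auto
  have "1 \<le> \<bar>2 * k + 1\<bar>"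
    by presburger
  then have "1 \<le> \<bar>2 * real_of_int k + 1\<bar>"
    by linarith
  then have "pi \<le> \<bar>t\<bar>"
    by (simp add: k abs_mult)
  then show ?thesis
    by (metis abs_ge_zero abs_of_nonneg pi_ge_zero power2_abs power_mono)
qed

lemma cis_eq_cis_pi_minus_if_sq_eq:
  assumes "(t + c)^2 = pi^2"
  shows "cis t = cis (pi - c)"
proof -
  have "t = pi - c \<or> t = (pi - c) - 2 * pi"
    using assms by (auto simp: power2_eq_iff)
  moreover have "cis ((pi - c) - 2 * pi) = cis (pi - c)"
    by (simp only: cis_divide[symmetric] cis_2pi div_by_1)
  ultimately show ?thesis
    by auto
qed

lemma abs_eq_iff_power2_eq: "0 \<le> c \<Longrightarrow> \<bar>x\<bar> = c \<longleftrightarrow> x^2 = (c :: real)^2"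
  by (metis abs_ge_zero power2_abs power2_eq_iff_nonneg)

lemma sum_power2_shift:
  fixes v :: "'n::finite \<Rightarrow> real"
  shows "(\<Sum>j\<in>UNIV. (v j + s)^2)
    = (\<Sum>j\<in>UNIV. (v j)^2) + 2 * s * (\<Sum>j\<in>UNIV. v j) + real CARD('n) * s^2"
proof -
  have "(v j + s)^2 = (v j)^2 + 2 * s * v j + s^2" for j
    by (simp add: power2_sum)
  then show ?thesis
    by (simp add: sum.distrib flip: sum_distrib_left)
qed

lemma sum_power2_ge_if_shifted_ge:
  fixes \<theta> :: "'n::finite \<Rightarrow> real"
  assumes "\<And>j. r \<le> (\<theta> j + c)^2" "(\<Sum>j\<in>UNIV. \<theta> j) = 0"
  shows "real CARD('n) * r - real CARD('n) * c^2 \<le> (\<Sum>j\<in>UNIV. (\<theta> j)^2)"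
proof -
  have "real CARD('n) * r \<le> (\<Sum>j\<in>UNIV. (\<theta> j + c)^2)"
    using sum_mono[of UNIV "\<lambda>_. r", OF assms(1)] by simp
  then show ?thesis
    using assms(2) by (simp add: sum_power2_shift)
qed

lemma sum_power2_centered:
  fixes v :: "'n::finite \<Rightarrow> real"
  assumes "(\<Sum>j\<in>UNIV. v j + s) = 0"
  shows "real CARD('n) * (\<Sum>j\<in>UNIV. (v j + s)^2)
    = real CARD('n) * (\<Sum>j\<in>UNIV. (v j)^2) - (\<Sum>j\<in>UNIV. v j)^2"
proof -
  have ns: "real CARD('n) * s = - (\<Sum>j\<in>UNIV. v j)"
    using assms by (simp add: sum.distrib)
  have "real CARD('n) * (\<Sum>j\<in>UNIV. (v j + s)^2) = real CARD('n) * (\<Sum>j\<in>UNIV. (v j)^2)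
      + 2 * (real CARD('n) * s) * (\<Sum>j\<in>UNIV. v j) + (real CARD('n) * s)^2"
    unfolding sum_power2_shift by (simp add: power2_eq_square algebra_simps)
  then show ?thesis
    by (simp add: ns power2_eq_square)
qed

lemma sum_power2_variance_le:
  fixes v :: "'n::finite \<Rightarrow> real"
  assumes "\<And>j. \<bar>v j\<bar> \<le> pi"
  shows "real CARD('n) * (\<Sum>j\<in>UNIV. (v j)^2) - (\<Sum>j\<in>UNIV. v j)^2 \<le> (real CARD('n) * pi)^2"
    and "real CARD('n) * (\<Sum>j\<in>UNIV. (v j)^2) - (\<Sum>j\<in>UNIV. v j)^2 = (real CARD('n) * pi)^2
      \<Longrightarrow> (\<Sum>j\<in>UNIV. v j) = 0 \<and> (\<forall>j. \<bar>v j\<bar> = pi)"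
proof -
  have sq: "(v j)^2 \<le> pi^2" for j
    using assms[of j] abs_le_square_iff[of "v j" pi] by simp
  have sum_sq: "(\<Sum>j\<in>UNIV. (v j)^2) \<le> real CARD('n) * pi^2"
    using sum_mono[of UNIV "\<lambda>j. (v j)^2" "\<lambda>_. pi^2"] sq by simp
  then have le: "real CARD('n) * (\<Sum>j\<in>UNIV. (v j)^2) \<le> (real CARD('n) * pi)^2"
    using mult_left_mono[OF sum_sq, of "real CARD('n)"]
    by (simp add: power_mult_distrib power2_eq_square[of "real CARD('n)"] mult.assoc)
  then show "real CARD('n) * (\<Sum>j\<in>UNIV. (v j)^2) - (\<Sum>j\<in>UNIV. v j)^2 \<le> (real CARD('n) * pi)^2"
    using zero_le_power2[of "\<Sum>j\<in>UNIV. v j"] by linarith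
  assume eq: "real CARD('n) * (\<Sum>j\<in>UNIV. (v j)^2) - (\<Sum>j\<in>UNIV. v j)^2 = (real CARD('n) * pi)^2"
  then have "(\<Sum>j\<in>UNIV. v j)^2 = 0"
    using le zero_le_power2[of "\<Sum>j\<in>UNIV. v j"] by linarith
  moreover have "(\<Sum>j\<in>UNIV. pi^2 - (v j)^2) = 0"
    using eq calculation by (simp add: sum_subtractf power_mult_distrib power2_eq_square)
  then have "\<forall>j. (v j)^2 = pi^2"
    using sq by (simp add: sum_nonneg_eq_0_iff)
  ultimately show "(\<Sum>j\<in>UNIV. v j) = 0 \<and> (\<forall>j. \<bar>v j\<bar> = pi)"
    by (simp add: abs_eq_iff_power2_eq)
qed

lemma odd_card_sum_odd_abs_ge_one:
  fixes k :: "'n::finite \<Rightarrow> int"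
  assumes "odd CARD('n)" "\<And>j. odd (k j)"
  shows "1 \<le> \<bar>\<Sum>j\<in>UNIV. k j\<bar>"
proof -
  have "odd (\<Sum>j\<in>UNIV. k j)"
    using assms by (simp add: even_sum_iff)
  then have "(\<Sum>j\<in>UNIV. k j) \<noteq> 0"
    by auto
  then show ?thesis
    by linarith
qed

text \<open>The signs of the \<open>v\<^sub>j\<close> cannot cancel for odd \<open>n\<close>, and \<open>\<pi> - \<bar>v\<^sub>j\<bar>\<close> bounds the error
  made by replacing \<open>v\<^sub>j\<close> with \<open>\<plusminus>\<pi>\<close>.\<close>

lemma odd_card_abs_sum_ge:
  fixes v :: "'n::finite \<Rightarrow> real"
  assumes "odd CARD('n)" "\<And>j. \<bar>v j\<bar> \<le> pi"
  shows "pi - (\<Sum>j\<in>UNIV. pi - \<bar>v j\<bar>) \<le> \<bar>\<Sum>j\<in>UNIV. v j\<bar>"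
proof -
  define k where "k j = (if 0 \<le> v j then 1 else -1 :: int)" for j
  have k_real: "real_of_int (k j) = (if 0 \<le> v j then 1 else -1)" for j
    by (simp add: k_def)
  have "1 \<le> \<bar>\<Sum>j\<in>UNIV. k j\<bar>"
    using assms(1) by (rule odd_card_sum_odd_abs_ge_one) (simp add: k_def)
  then have "pi \<le> \<bar>pi * (\<Sum>j\<in>UNIV. real_of_int (k j))\<bar>"
    by (simp add: abs_mult flip: of_int_sum)
  moreover have "(\<Sum>j\<in>UNIV. v j)
      = (\<Sum>j\<in>UNIV. real_of_int (k j) * pi - real_of_int (k j) * (pi - \<bar>v j\<bar>))"
    by (intro sum.cong refl) (simp add: k_real)
  then have "(\<Sum>j\<in>UNIV. v j)
      = pi * (\<Sum>j\<in>UNIV. real_of_int (k j)) - (\<Sum>j\<in>UNIV. real_of_int (k j) * (pi - \<bar>v j\<bar>))"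
    by (simp add: sum_subtractf sum_distrib_left mult.commute)
  moreover have "\<bar>real_of_int (k j) * (pi - \<bar>v j\<bar>)\<bar> = pi - \<bar>v j\<bar>" for j
    using assms(2)[of j] by (simp add: k_real abs_mult)
  then have "\<bar>\<Sum>j\<in>UNIV. real_of_int (k j) * (pi - \<bar>v j\<bar>)\<bar> \<le> (\<Sum>j\<in>UNIV. pi - \<bar>v j\<bar>)"
    using sum_abs[of "\<lambda>j. real_of_int (k j) * (pi - \<bar>v j\<bar>)" UNIV] by simp
  ultimately show ?thesis
    by linarith
qed

lemma power2_le_mult_defect_add_power2:
  fixes n r E V :: real
  assumes "0 < r" "3 \<le> n" "0 \<le> E" "r - E \<le> \<bar>V\<bar>"
  shows "r^2 \<le> n * r * E + V^2 \<and> (n * r * E + V^2 = r^2 \<longrightarrow> E = 0 \<and> V^2 = r^2)"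
proof (cases "r \<le> E")
  case True
  then have "3 * r * r \<le> n * r * E"
    using assms by (intro mult_mono) auto
  moreover have "0 < r * r" "0 \<le> V * V"
    using assms(1) by simp_all
  ultimately have "r * r < n * r * E + V * V"
    by linarith
  then show ?thesis
    by (auto simp: power2_eq_square)
next
  case False
  then have "(r - E)^2 \<le> V^2"
    using assms(4) abs_le_square_iff[of "r - E" V] by simp
  moreover have "n * r * E + (r - E)^2 - r^2 = E * (E + (n - 2) * r)"
    by (simp add: power2_eq_square algebra_simps)
  moreover have "0 \<le> E * (E + (n - 2) * r)"
    using assms by simp
  moreover have "0 < E * (E + (n - 2) * r)" if "0 < E"
    using that assms by (simp add: add_pos_nonneg)
  ultimately show ?thesis
    using assms(3) by (smt (verit))
qed

text \<open>With \<open>E = \<Sum>\<^sub>j (\<pi> - \<bar>v\<^sub>j\<bar>)\<close> one has \<open>\<Sum>\<^sub>j v\<^sub>j\<^sup>2 \<le> n\<pi>\<^sup>2 - \<pi>E\<close> and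
  \<open>\<bar>\<Sum>\<^sub>j v\<^sub>j\<bar> \<ge> \<pi> - E\<close>.\<close>

lemma odd_card_sum_power2_variance_le:
  fixes v :: "'n::finite \<Rightarrow> real"
  assumes "odd CARD('n)" "3 \<le> CARD('n)" and bound: "\<And>j. \<bar>v j\<bar> \<le> pi"
  defines "n \<equiv> real CARD('n)"
  shows "n * (\<Sum>j\<in>UNIV. (v j)^2) - (\<Sum>j\<in>UNIV. v j)^2 \<le> (n^2 - 1) * pi^2"
    and "n * (\<Sum>j\<in>UNIV. (v j)^2) - (\<Sum>j\<in>UNIV. v j)^2 = (n^2 - 1) * pi^2
      \<Longrightarrow> \<bar>\<Sum>j\<in>UNIV. v j\<bar> = pi \<and> (\<forall>j. \<bar>v j\<bar> = pi)"
proof -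
  define E where "E = (\<Sum>j\<in>UNIV. pi - \<bar>v j\<bar>)"
  define V where "V = (\<Sum>j\<in>UNIV. v j)"
  have "0 \<le> E"
    unfolding E_def using bound by (simp add: sum_nonneg)
  have "(v j)^2 \<le> pi^2 - pi * (pi - \<bar>v j\<bar>)" for j
  proof -
    have "\<bar>v j\<bar> * \<bar>v j\<bar> \<le> pi * \<bar>v j\<bar>"
      using bound[of j] by (intro mult_right_mono) auto
    then show ?thesis
      by (simp add: power2_eq_square algebra_simps)
  qed
  then have "(\<Sum>j\<in>UNIV. (v j)^2) \<le> (\<Sum>j\<in>UNIV. pi^2 - pi * (pi - \<bar>v j\<bar>))"
    by (rule sum_mono)
  also have "\<dots> = n * pi^2 - pi * E"
    by (simp add: E_def n_def sum_subtractf sum_distrib_left sum.distrib algebra_simps)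
  finally have "n * (\<Sum>j\<in>UNIV. (v j)^2) \<le> n * (n * pi^2 - pi * E)"
    by (simp add: n_def mult_left_mono)
  moreover have "n * (n * pi^2 - pi * E) = n^2 * pi^2 - n * pi * E"
    by (simp add: power2_eq_square algebra_simps)
  moreover have "(n^2 - 1) * pi^2 = n^2 * pi^2 - pi^2"
    by (simp add: algebra_simps)
  ultimately have main: "n * (\<Sum>j\<in>UNIV. (v j)^2) - V^2 \<le> (n^2 - 1) * pi^2 - (n * pi * E + V^2 - pi^2)"
    by linarith
  have key: "pi^2 \<le> n * pi * E + V^2 \<and> (n * pi * E + V^2 = pi^2 \<longrightarrow> E = 0 \<and> V^2 = pi^2)"
    using assms(2) odd_card_abs_sum_ge[OF assms(1) bound] \<open>0 \<le> E\<close>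
    by (intro power2_le_mult_defect_add_power2) (simp_all add: n_def E_def V_def)
  then show "n * (\<Sum>j\<in>UNIV. (v j)^2) - (\<Sum>j\<in>UNIV. v j)^2 \<le> (n^2 - 1) * pi^2"
    using main by (simp add: V_def)
  assume "n * (\<Sum>j\<in>UNIV. (v j)^2) - (\<Sum>j\<in>UNIV. v j)^2 = (n^2 - 1) * pi^2"
  then have "E = 0 \<and> V^2 = pi^2"
    using main key by (simp add: V_def)
  moreover from this have "\<forall>j. pi - \<bar>v j\<bar> = 0"
    using bound unfolding E_def by (simp add: sum_nonneg_eq_0_iff)
  ultimately show "\<bar>\<Sum>j\<in>UNIV. v j\<bar> = pi \<and> (\<forall>j. \<bar>v j\<bar> = pi)"
    by (simp add: V_def abs_eq_iff_power2_eq)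
qed

text \<open>A shift \<open>c\<close> stands for the maximiser \<open>cis (\<pi> - c) I\<close>: \<open>-I\<close> for even \<open>n\<close> and
  \<open>exp(\<plusminus>(n - 1)\<pi>\<i>/n) I\<close> for odd \<open>n\<close>.\<close>

definition extremal_shifts :: "nat \<Rightarrow> real set" where
  "extremal_shifts n = (if even n then {0} else {pi / real n, - (pi / real n)})"

definition delta_formula :: "nat \<Rightarrow> real" where
  "delta_formula n = (if even n then real n * pi^2 else (real n - 1 / real n) * pi^2)"

lemma delta_formula_eq:
  assumes "c \<in> extremal_shifts n" "0 < n"
  shows "delta_formula n = real n * pi^2 - real n * c^2"
proof -
  have "real n * c^2 = (if even n then 0 else pi^2 / real n)"
    using assms by (auto simp: extremal_shifts_def power2_eq_square)
  then show ?thesis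
    by (simp add: delta_formula_def algebra_simps)
qed

text \<open>Shifting by \<open>min \<theta> + \<pi>\<close> puts all angles into \<open>[-\<pi>, \<pi>]\<close>; as \<open>\<Sum>\<^sub>j \<theta>\<^sub>j = 0\<close>,
  \<open>\<theta>\<close> is the shifted vector minus its mean.\<close>

lemma spread_le_imp_centered_bounded:
  fixes \<theta> :: "'n::finite \<Rightarrow> real"
  assumes "(\<Sum>j\<in>UNIV. \<theta> j) = 0" and spread: "\<And>i j. \<theta> i - \<theta> j \<le> 2 * pi"
  obtains v where "\<And>j. \<bar>v j\<bar> \<le> pi" "\<And>j. \<theta> j + (\<Sum>j\<in>UNIV. v j) / real CARD('n) = v j"
    "real CARD('n) * (\<Sum>j\<in>UNIV. (\<theta> j)^2)
       = real CARD('n) * (\<Sum>j\<in>UNIV. (v j)^2) - (\<Sum>j\<in>UNIV. v j)^2"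
proof -
  have "Min (range \<theta>) \<in> range \<theta>"
    by (rule Min_in) auto
  then obtain j0 where j0: "Min (range \<theta>) = \<theta> j0"
    by blast
  define v where "v j = \<theta> j - (\<theta> j0 + pi)" for j
  have "\<bar>v j\<bar> \<le> pi" for j
    using Min_le[of "range \<theta>" "\<theta> j"] spread[of j j0] by (auto simp: v_def j0 abs_le_iff)
  moreover have \<theta>_v: "\<theta> j + (\<Sum>j\<in>UNIV. v j) / real CARD('n) = v j" for j
  proof -
    have "(\<Sum>j\<in>UNIV. v j) = - real CARD('n) * (\<theta> j0 + pi)"
      using assms(1) by (simp add: v_def sum_subtractf)
    then show ?thesis
      by (simp add: v_def)
  qed
  moreover have "real CARD('n) * (\<Sum>j\<in>UNIV. (\<theta> j)^2)
       = real CARD('n) * (\<Sum>j\<in>UNIV. (v j)^2) - (\<Sum>j\<in>UNIV. v j)^2"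
    using sum_power2_centered[of v "- (\<Sum>j\<in>UNIV. v j) / real CARD('n)"] assms(1) \<theta>_v
    by (simp add: eq_diff_eq[symmetric])
  ultimately show ?thesis
    using that by blast
qed

lemma sum_power2_le_delta_formula:
  fixes \<theta> :: "'n::finite \<Rightarrow> real"
  assumes "2 \<le> CARD('n)" "(\<Sum>j\<in>UNIV. \<theta> j) = 0" "\<And>i j. \<theta> i - \<theta> j \<le> 2 * pi"
  shows "(\<Sum>j\<in>UNIV. (\<theta> j)^2) \<le> delta_formula CARD('n)"
    and "(\<Sum>j\<in>UNIV. (\<theta> j)^2) = delta_formula CARD('n)
      \<Longrightarrow> \<exists>c\<in>extremal_shifts CARD('n). \<forall>j. (\<theta> j + c)^2 = pi^2"
proof -
  define n where "n = real CARD('n)"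
  obtain v where v_bound: "\<And>j. \<bar>v j\<bar> \<le> pi" and \<theta>_v: "\<And>j. \<theta> j + (\<Sum>j\<in>UNIV. v j) / n = v j"
    and centered: "n * (\<Sum>j\<in>UNIV. (\<theta> j)^2) = n * (\<Sum>j\<in>UNIV. (v j)^2) - (\<Sum>j\<in>UNIV. v j)^2"
    using spread_le_imp_centered_bounded[OF assms(2,3)] unfolding n_def by blast
  have "0 < n" by (simp add: n_def)
  have main: "n * (\<Sum>j\<in>UNIV. (\<theta> j)^2) \<le> n * delta_formula CARD('n)
      \<and> (n * (\<Sum>j\<in>UNIV. (\<theta> j)^2) = n * delta_formula CARD('n)
         \<longrightarrow> (\<Sum>j\<in>UNIV. v j) / n \<in> extremal_shifts CARD('n) \<and> (\<forall>j. \<bar>v j\<bar> = pi))"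
  proof (cases "even CARD('n)")
    case True
    then have "n * delta_formula CARD('n) = (n * pi)^2"
      by (simp add: delta_formula_def n_def power2_eq_square)
    then show ?thesis
      using sum_power2_variance_le[of v, OF v_bound] True
      unfolding centered by (simp add: n_def extremal_shifts_def)
  next
    case False
    then have "3 \<le> CARD('n)"
      using assms(1) by presburger
    have "n * delta_formula CARD('n) = (n^2 - 1) * pi^2"
      using False \<open>0 < n\<close> by (simp add: delta_formula_def n_def power2_eq_square field_simps)
    moreover have "(\<Sum>j\<in>UNIV. v j) / n \<in> extremal_shifts CARD('n)" if "\<bar>\<Sum>j\<in>UNIV. v j\<bar> = pi"
    proof -
      have "(\<Sum>j\<in>UNIV. v j) = pi \<or> (\<Sum>j\<in>UNIV. v j) = - pi"
        using that by arith
      then show ?thesis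
        using False by (auto simp: extremal_shifts_def n_def)
    qed
    ultimately show ?thesis
      using odd_card_sum_power2_variance_le[where v = v, OF False \<open>3 \<le> CARD('n)\<close> v_bound]
      unfolding centered by (simp add: n_def)
  qed
  then show "(\<Sum>j\<in>UNIV. (\<theta> j)^2) \<le> delta_formula CARD('n)"
    using \<open>0 < n\<close> by simp
  assume "(\<Sum>j\<in>UNIV. (\<theta> j)^2) = delta_formula CARD('n)"
  with main have "(\<Sum>j\<in>UNIV. v j) / n \<in> extremal_shifts CARD('n)" "\<forall>j. \<bar>v j\<bar> = pi"
    by simp_all
  then show "\<exists>c\<in>extremal_shifts CARD('n). \<forall>j. (\<theta> j + c)^2 = pi^2"
    using \<theta>_v by (intro bexI[of _ "(\<Sum>j\<in>UNIV. v j) / n"]) (simp_all add: abs_eq_iff_power2_eq)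
qed

section \<open>Lifting unit complex numbers to angles\<close>

lemma cis_sum: "cis (\<Sum>j\<in>A. f j) = (\<Prod>j\<in>A. cis (f j))"
  by (cases "finite A") (simp_all add: cis_conv_exp sum_distrib_left exp_sum of_real_sum)

lemma cis_add_int_multiple_2pi: "cis (x + 2 * pi * of_int k) = cis x"
  by (simp flip: cis_mult add: cis_multiple_2pi)

lemma cis_diff_int_multiple_2pi: "cis (x - 2 * pi * of_int k) = cis x"
  by (simp flip: cis_divide add: cis_multiple_2pi)

lemma exists_angles_sum_zero:
  fixes z :: "'n::finite \<Rightarrow> complex"
  assumes "\<And>j. cmod (z j) = 1" "(\<Prod>j\<in>UNIV. z j) = 1"
  obtains \<phi> where "\<And>j. cis (\<phi> j) = z j" "(\<Sum>j\<in>UNIV. \<phi> j) = 0"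
proof -
  define \<psi> where "\<psi> j = Arg (z j)" for j
  have \<psi>: "cis (\<psi> j) = z j" for j
  proof -
    have "z j \<noteq> 0" using assms(1)[of j] by auto
    then show ?thesis using assms(1)[of j] by (simp add: \<psi>_def cis_Arg sgn_eq)
  qed
  then have "cis (\<Sum>j\<in>UNIV. \<psi> j) = 1"
    using assms(2) by (simp add: cis_sum)
  then obtain K :: int where K: "(\<Sum>j\<in>UNIV. \<psi> j) = 2 * pi * of_int K"
    unfolding cis_conv_exp exp_eq_1 by (auto simp: mult.commute mult.left_commute)
  fix j0 :: 'n
  define \<phi> where "\<phi> j = \<psi> j - (if j = j0 then 2 * pi * of_int K else 0)" for j
  have "cis (\<phi> j) = z j" for j
    using \<psi> by (simp add: \<phi>_def cis_diff_int_multiple_2pi)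
  moreover have "(\<Sum>j\<in>UNIV. \<phi> j) = 0"
    using K by (simp add: \<phi>_def sum_subtractf)
  ultimately show ?thesis
    using that by blast
qed

lemma int_shift_bounded_if_sum_power2_le:
  fixes \<phi> :: "'n::finite \<Rightarrow> real" and k :: "'n \<Rightarrow> int"
  assumes "(\<Sum>j\<in>UNIV. (\<phi> j + 2 * pi * of_int (k j))^2) \<le> C"
  shows "\<bar>k j\<bar> \<le> \<lceil>(sqrt C + (\<Sum>j\<in>UNIV. \<bar>\<phi> j\<bar>)) / (2 * pi)\<rceil>"
proof -
  have "(\<phi> j + 2 * pi * of_int (k j))^2 \<le> C"
    using assms member_le_sum[of j UNIV "\<lambda>j. (\<phi> j + 2 * pi * of_int (k j))^2"] by simp
  then have "\<bar>\<phi> j + 2 * pi * of_int (k j)\<bar> \<le> sqrt C"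
    using real_le_rsqrt by fastforce
  moreover have "\<bar>\<phi> j\<bar> \<le> (\<Sum>j\<in>UNIV. \<bar>\<phi> j\<bar>)"
    by (rule member_le_sum) auto
  ultimately have "2 * pi * \<bar>real_of_int (k j)\<bar> \<le> sqrt C + (\<Sum>j\<in>UNIV. \<bar>\<phi> j\<bar>)"
    by (simp add: abs_mult)
  then have "\<bar>real_of_int (k j)\<bar> \<le> (sqrt C + (\<Sum>j\<in>UNIV. \<bar>\<phi> j\<bar>)) / (2 * pi)"
    by (simp add: field_simps)
  then show ?thesis
    by linarith
qed

text \<open>The shifts \<open>k\<close> doing at least as well as \<open>k = 0\<close> are bounded, hence finitely many,
  and a minimiser exists among them.\<close>

lemma exists_min_sum_power2_int_shift:
  fixes \<phi> :: "'n::finite \<Rightarrow> real"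
  obtains k :: "'n \<Rightarrow> int" where "sum k UNIV = 0"
    "\<And>k'. sum k' UNIV = 0 \<Longrightarrow>
       (\<Sum>j\<in>UNIV. (\<phi> j + 2 * pi * of_int (k j))^2) \<le> (\<Sum>j\<in>UNIV. (\<phi> j + 2 * pi * of_int (k' j))^2)"
proof -
  define f where "f k = (\<Sum>j\<in>UNIV. (\<phi> j + 2 * pi * of_int (k j))^2)" for k :: "'n \<Rightarrow> int"
  define B where "B = \<lceil>(sqrt (f (\<lambda>_. 0)) + (\<Sum>j\<in>UNIV. \<bar>\<phi> j\<bar>)) / (2 * pi)\<rceil>"
  define F where "F = {k. sum k UNIV = 0 \<and> f k \<le> f (\<lambda>_. 0)}"
  have "k j \<in> {-B..B}" if "k \<in> F" for k j
    using int_shift_bounded_if_sum_power2_le[of \<phi> k "f (\<lambda>_. 0)" j] that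
    by (auto simp: F_def f_def B_def abs_le_iff)
  then have "F \<subseteq> Pi\<^sub>E UNIV (\<lambda>_. {-B..B})"
    by (auto simp: PiE_UNIV_domain)
  then have "finite F"
    by (rule finite_subset) (intro finite_PiE, auto)
  moreover have "(\<lambda>_. 0) \<in> F"
    by (simp add: F_def)
  ultimately obtain k where "is_arg_min f (\<lambda>k. k \<in> F) k"
    using ex_is_arg_min_if_finite[of F f] by blast
  then have "k \<in> F" and min: "\<And>k'. k' \<in> F \<Longrightarrow> f k \<le> f k'"
    by (auto simp: is_arg_min_def not_less)
  have "f k \<le> f k'" if "sum k' UNIV = 0" for k'
    using that min[of k'] \<open>k \<in> F\<close> by (cases "f k' \<le> f (\<lambda>_. 0)") (auto simp: F_def)
  then show ?thesis
    using that \<open>k \<in> F\<close> by (auto simp: F_def f_def)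
qed

text \<open>Moving \<open>2\<pi>\<close> from the largest to the smallest angle changes the sum of squares by
  \<open>8\<pi>\<^sup>2 - 4\<pi>(\<theta>\<^sub>i - \<theta>\<^sub>j)\<close>.\<close>

lemma min_int_shift_spread_le:
  fixes \<theta> :: "'n::finite \<Rightarrow> real"
  assumes min: "\<And>k :: 'n \<Rightarrow> int. sum k UNIV = 0 \<Longrightarrow>
      (\<Sum>j\<in>UNIV. (\<theta> j)^2) \<le> (\<Sum>j\<in>UNIV. (\<theta> j + 2 * pi * of_int (k j))^2)"
  shows "\<theta> i - \<theta> j \<le> 2 * pi"
proof (cases "i = j")
  case False
  define k :: "'n \<Rightarrow> int" where "k l = (if l = j then 1 else 0) - (if l = i then 1 else 0)" for l
  have "sum k UNIV = 0"
    by (simp add: k_def sum_subtractf)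
  have "(\<theta> l + 2 * pi * of_int (k l))^2 = (\<theta> l)^2 + (if l = i then 4 * pi^2 - 4 * pi * \<theta> i else 0)
      + (if l = j then 4 * pi^2 + 4 * pi * \<theta> j else 0)" for l
    using False by (auto simp: k_def power2_eq_square algebra_simps)
  then have "(\<Sum>l\<in>UNIV. (\<theta> l + 2 * pi * of_int (k l))^2)
      = (\<Sum>l\<in>UNIV. (\<theta> l)^2) + 8 * pi^2 - 4 * pi * (\<theta> i - \<theta> j)"
    by (simp add: sum.distrib algebra_simps)
  then have "4 * pi * (\<theta> i - \<theta> j) \<le> 4 * pi * (2 * pi)"
    using min[OF \<open>sum k UNIV = 0\<close>] by (simp add: power2_eq_square)
  then show ?thesis
    by simp
qed simp

lemma exists_angles_sum_zero_spread_le: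
  fixes z :: "'n::finite \<Rightarrow> complex"
  assumes "\<And>j. cmod (z j) = 1" "(\<Prod>j\<in>UNIV. z j) = 1"
  obtains \<theta> where "\<And>j. cis (\<theta> j) = z j" "(\<Sum>j\<in>UNIV. \<theta> j) = 0" "\<And>i j. \<theta> i - \<theta> j \<le> 2 * pi"
proof -
  obtain \<phi> where \<phi>: "\<And>j. cis (\<phi> j) = z j" "(\<Sum>j\<in>UNIV. \<phi> j) = 0"
    using exists_angles_sum_zero[OF assms] by blast
  obtain k :: "'n \<Rightarrow> int" where k: "sum k UNIV = 0"
    and min: "\<And>k'. sum k' UNIV = 0 \<Longrightarrow>
       (\<Sum>j\<in>UNIV. (\<phi> j + 2 * pi * of_int (k j))^2) \<le> (\<Sum>j\<in>UNIV. (\<phi> j + 2 * pi * of_int (k' j))^2)"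
    using exists_min_sum_power2_int_shift by blast
  define \<theta> where "\<theta> j = \<phi> j + 2 * pi * of_int (k j)" for j
  have "cis (\<theta> j) = z j" for j
    using \<phi>(1) by (simp add: \<theta>_def cis_add_int_multiple_2pi)
  moreover have "(\<Sum>j\<in>UNIV. \<theta> j) = 0"
    using \<phi>(2) k by (simp add: \<theta>_def sum.distrib flip: sum_distrib_left of_int_sum)
  moreover have "\<theta> i - \<theta> j \<le> 2 * pi" for i j
  proof (rule min_int_shift_spread_le)
    fix k' :: "'n \<Rightarrow> int" assume "sum k' UNIV = 0"
    then have "(\<Sum>j\<in>UNIV. k j + k' j) = 0"
      using k by (simp add: sum.distrib)
    then show "(\<Sum>j\<in>UNIV. (\<theta> j)^2) \<le> (\<Sum>j\<in>UNIV. (\<theta> j + 2 * pi * of_int (k' j))^2)"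
      using min[of "\<lambda>j. k j + k' j"] by (simp add: \<theta>_def algebra_simps)
  qed
  ultimately show ?thesis
    using that by blast
qed

section \<open>Diagonalising elements of \<open>su\<^sub>n\<close> and \<open>SU\<^sub>n\<close>\<close>

lemma su_unitary_diag:
  fixes X :: "complex^'n^'n"
  assumes "X \<in> su"
  obtains U \<theta> where "unitary U" "X = U ** diag_mat (\<lambda>j. \<i> * of_real (\<theta> j)) ** conj_transpose U"
    "(\<Sum>j\<in>UNIV. \<theta> j) = 0"
proof -
  have skew: "conj_transpose X = - X" and "trace X = 0"
    using assms by (auto simp: su_def)
  then have "X ** conj_transpose X = conj_transpose X ** X"
    by (simp add: matrix_mul_uminus_left matrix_mul_uminus_right)
  then obtain U d where U: "unitary U" and X: "X = U ** diag_mat d ** conj_transpose U"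
    by (rule normal_unitary_diag)
  have "U ** diag_mat (\<lambda>j. cnj (d j)) ** conj_transpose U = U ** diag_mat (\<lambda>j. - d j) ** conj_transpose U"
    using skew unfolding X
    by (simp add: conj_transpose_unitary_conj conj_transpose_diag_mat diag_mat_uminus
        matrix_mul_uminus_left matrix_mul_uminus_right)
  then have diag_eq: "diag_mat (\<lambda>j. cnj (d j)) = diag_mat (\<lambda>j. - d j)"
    by (rule unitary_conj_inject[OF U])
  have "cnj (d j) = - d j" for j
  proof -
    have "diag_mat (\<lambda>j. cnj (d j)) $ j $ j = diag_mat (\<lambda>j. - d j) $ j $ j"
      by (simp only: diag_eq)
    then show ?thesis by simp
  qed
  then have d: "d j = \<i> * of_real (Im (d j))" for j
    by (simp add: complex_eq_iff)
  then have d_eq: "d = (\<lambda>j. \<i> * of_real (Im (d j)))"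
    by (rule ext)
  have "trace X = (\<Sum>j\<in>UNIV. d j)"
    by (simp add: X trace_unitary_conj[OF U] trace_diag_mat)
  also have "\<dots> = (\<Sum>j\<in>UNIV. \<i> * of_real (Im (d j)))"
    by (rule sum.cong) (simp_all flip: d)
  finally have "trace X = \<i> * of_real (\<Sum>j\<in>UNIV. Im (d j))"
    by (simp add: sum_distrib_left)
  then have "(\<Sum>j\<in>UNIV. Im (d j)) = 0"
    using \<open>trace X = 0\<close> by (metis mult_eq_0_iff of_real_eq_0_iff complex_i_not_zero)
  moreover have "X = U ** diag_mat (\<lambda>j. \<i> * of_real (Im (d j))) ** conj_transpose U"
    using X d_eq by simp
  ultimately show ?thesis
    by (intro that[OF U])
qed

lemma unitary_conj_diag_in_su:
  assumes "unitary U" "(\<Sum>j\<in>UNIV. \<theta> j) = 0"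
  shows "U ** diag_mat (\<lambda>j. \<i> * of_real (\<theta> j)) ** conj_transpose U \<in> su"
  using assms
  by (simp add: su_def conj_transpose_unitary_conj conj_transpose_diag_mat trace_unitary_conj
      trace_diag_mat diag_mat_uminus matrix_mul_uminus_left matrix_mul_uminus_right
      flip: sum_distrib_left of_real_sum)

lemma frob_norm_unitary_conj_diag:
  assumes "unitary U"
  shows "(frob_norm (U ** diag_mat d ** conj_transpose U))^2 = (\<Sum>j\<in>UNIV. (cmod (d j))^2)"
proof -
  have "trace ((U ** diag_mat d ** conj_transpose U) ** conj_transpose (U ** diag_mat d ** conj_transpose U))
      = of_real (\<Sum>j\<in>UNIV. (cmod (d j))^2)"
    using assms
    by (simp del: of_real_power add: conj_transpose_unitary_conj conj_transpose_diag_mat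
        unitary_conj_mult trace_unitary_conj diag_mat_mult trace_diag_mat complex_norm_square)
  then show ?thesis
    by (simp add: frob_norm_def sum_nonneg del: of_real_sum of_real_power)
qed

lemma SU_unitary_diag:
  fixes Q :: "complex^'n^'n"
  assumes "Q \<in> SU"
  obtains U d where "unitary U" "Q = U ** diag_mat d ** conj_transpose U"
    "\<And>j. cmod (d j) = 1" "(\<Prod>j\<in>UNIV. d j) = 1"
proof -
  have "Q ** conj_transpose Q = mat 1" and "det Q = 1"
    using assms by (auto simp: SU_def)
  moreover from this have "conj_transpose Q ** Q = mat 1"
    using matrix_left_right_inverse by blast
  ultimately have "Q ** conj_transpose Q = conj_transpose Q ** Q"
    by simp
  then obtain U d where U: "unitary U" and Q: "Q = U ** diag_mat d ** conj_transpose U"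
    by (rule normal_unitary_diag)
  have "U ** diag_mat (\<lambda>j. d j * cnj (d j)) ** conj_transpose U = mat 1"
    using \<open>Q ** conj_transpose Q = mat 1\<close> U
    by (simp add: Q conj_transpose_unitary_conj conj_transpose_diag_mat unitary_conj_mult diag_mat_mult)
  then have "d j * cnj (d j) = 1" for j
    by (simp add: unitary_conj_eq_mat_iff[OF U] diag_mat_eq_mat_iff)
  have "cmod (d j) = 1" for j
  proof -
    have "complex_of_real ((cmod (d j))^2) = 1"
      using \<open>d j * cnj (d j) = 1\<close> by (simp only: complex_norm_square)
    then show ?thesis
      using abs_eq_iff_power2_eq[of 1 "cmod (d j)"] by (simp only: of_real_eq_1_iff) simp
  qed
  moreover have "det Q = det (diag_mat d) * det (U ** conj_transpose U)"
    by (simp add: Q det_mul)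
  then have "(\<Prod>j\<in>UNIV. d j) = det Q"
    using U by (simp add: unitary_def det_diag_mat)
  ultimately show ?thesis
    using \<open>det Q = 1\<close> by (intro that[OF U Q]) simp_all
qed

lemma scalar_mat_in_SU:
  assumes "z ^ CARD('n) = 1"
  shows "(mat z :: complex^'n^'n) \<in> SU"
proof -
  have "cmod z = 1"
    using power_eq_1_iff[OF assms] by simp
  then have "z * cnj z = 1"
    by (simp add: complex_norm_square[symmetric])
  moreover have "mat z ** conj_transpose (mat z) = (mat (z * cnj z) :: complex^'n^'n)"
    by (simp add: conj_transpose_diag_mat diag_mat_mult flip: diag_mat_const)
  moreover have "det (mat z :: complex^'n^'n) = z ^ CARD('n)"
    by (simp add: det_diag_mat flip: diag_mat_const)
  ultimately show ?thesis
    using assms by (simp add: SU_def)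
qed

section \<open>The maximal squared distance\<close>

lemma cis_extremal_shift_power:
  assumes "c \<in> extremal_shifts n"
  shows "cis (pi - c) ^ n = 1"
proof -
  obtain m :: int where "real n * (pi - c) = 2 * pi * of_int m"
  proof (cases "even n")
    case True
    then show ?thesis
      using assms that[of "int n div 2"] by (auto simp: extremal_shifts_def elim!: evenE)
  next
    case False
    then obtain k where "n = 2 * k + 1" by (rule oddE)
    then have "real n * (pi - pi / real n) = 2 * pi * of_int (int k)"
      and "real n * (pi + pi / real n) = 2 * pi * of_int (int k + 1)"
      by (simp_all add: field_simps)
    then show ?thesis
      using assms False that[of "int k"] that[of "int k + 1"] by (auto simp: extremal_shifts_def)
  qed
  then have "cis (pi - c) ^ n = cis (2 * pi * of_int m)"
    by (simp only: Complex.DeMoivre)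
  also have "\<dots> = 1"
    by (rule cis_multiple_2pi) simp
  finally show ?thesis .
qed

lemma frob_norm_sq_ge_if_exp_eq_scalar:
  fixes X :: "complex^'n^'n"
  assumes "X \<in> su" "cmat_exp X = mat (cis (pi - c))"
  shows "real CARD('n) * pi^2 - real CARD('n) * c^2 \<le> (frob_norm X)^2"
proof -
  obtain U \<theta> where U: "unitary U" and X: "X = U ** diag_mat (\<lambda>j. \<i> * of_real (\<theta> j)) ** conj_transpose U"
    and "(\<Sum>j\<in>UNIV. \<theta> j) = 0"
    using su_unitary_diag[OF assms(1)] by blast
  have "diag_mat (\<lambda>j. cis (\<theta> j)) = mat (cis (pi - c))"
    using assms(2) by (simp add: X cmat_exp_unitary_conj_diag_mat[OF U] unitary_conj_eq_mat_iff[OF U]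
        cis_conv_exp)
  then have "cis (\<theta> j) = cis (pi - c)" for j
    by (simp add: diag_mat_eq_mat_iff)
  then have "cis (\<theta> j + c) = -1" for j
    by (metis cis_mult cis_pi diff_add_cancel)
  then have "pi^2 \<le> (\<theta> j + c)^2" for j
    by (rule cis_eq_minus_one_imp_pi_sq_le)
  then show ?thesis
    using sum_power2_ge_if_shifted_ge[where \<theta> = \<theta> and r = "pi^2" and c = c]
      \<open>(\<Sum>j\<in>UNIV. \<theta> j) = 0\<close>
    by (simp add: X frob_norm_unitary_conj_diag[OF U] norm_mult)
qed

lemma exists_log_frob_norm_sq_le_delta_formula:
  fixes Q :: "complex^'n^'n"
  assumes "2 \<le> CARD('n)" "Q \<in> SU"
  obtains X where "X \<in> su" "cmat_exp X = Q" "(frob_norm X)^2 \<le> delta_formula CARD('n)"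
    "(frob_norm X)^2 = delta_formula CARD('n) \<Longrightarrow>
       \<exists>c\<in>extremal_shifts CARD('n). Q = mat (cis (pi - c))"
proof -
  obtain U d where U: "unitary U" and Q: "Q = U ** diag_mat d ** conj_transpose U"
    and "\<And>j. cmod (d j) = 1" "(\<Prod>j\<in>UNIV. d j) = 1"
    using SU_unitary_diag[OF assms(2)] by blast
  then obtain \<theta> where d: "\<And>j. cis (\<theta> j) = d j" and "(\<Sum>j\<in>UNIV. \<theta> j) = 0"
    and "\<And>i j. \<theta> i - \<theta> j \<le> 2 * pi"
    using exists_angles_sum_zero_spread_le by metis
  note bound = sum_power2_le_delta_formula[OF assms(1) this(2,3)]
  define X where "X = U ** diag_mat (\<lambda>j. \<i> * of_real (\<theta> j)) ** conj_transpose U"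
  have "X \<in> su"
    unfolding X_def using U \<open>(\<Sum>j\<in>UNIV. \<theta> j) = 0\<close> by (rule unitary_conj_diag_in_su)
  moreover have "cmat_exp X = Q"
    using d by (simp add: X_def Q cmat_exp_unitary_conj_diag_mat[OF U] flip: cis_conv_exp)
  moreover have frob: "(frob_norm X)^2 = (\<Sum>j\<in>UNIV. (\<theta> j)^2)"
    by (simp add: X_def frob_norm_unitary_conj_diag[OF U] norm_mult)
  moreover have "\<exists>c\<in>extremal_shifts CARD('n). Q = mat (cis (pi - c))"
    if "(frob_norm X)^2 = delta_formula CARD('n)"
  proof -
    have "(\<Sum>j\<in>UNIV. (\<theta> j)^2) = delta_formula CARD('n)"
      using that frob by simp
    then obtain c where "c \<in> extremal_shifts CARD('n)" and "\<And>j. (\<theta> j + c)^2 = pi^2"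
      using bound(2) by blast
    then have "d = (\<lambda>_. cis (pi - c))"
      using d cis_eq_cis_pi_minus_if_sq_eq by (metis ext)
    then show ?thesis
      using \<open>c \<in> extremal_shifts CARD('n)\<close> U by (auto simp: Q diag_mat_const unitary_conj_mat)
  qed
  ultimately show ?thesis
    using that bound(1) by (metis frob)
qed

lemma m_SU_le: "X \<in> su \<Longrightarrow> cmat_exp X = Q \<Longrightarrow> m_SU Q \<le> (frob_norm X)^2"
  unfolding m_SU_def by (rule cInf_lower) (auto intro: bdd_belowI[of _ 0])

lemma m_SU_ge:
  assumes "X \<in> su" "cmat_exp X = Q" "\<And>Y. Y \<in> su \<Longrightarrow> cmat_exp Y = Q \<Longrightarrow> b \<le> (frob_norm Y)^2"
  shows "b \<le> m_SU Q"
  unfolding m_SU_def using assms by (intro cInf_greatest) auto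

lemma m_SU_le_delta_formula:
  fixes Q :: "complex^'n^'n"
  assumes "2 \<le> CARD('n)" "Q \<in> SU"
  shows "m_SU Q \<le> delta_formula CARD('n)"
    and "m_SU Q = delta_formula CARD('n) \<Longrightarrow> \<exists>c\<in>extremal_shifts CARD('n). Q = mat (cis (pi - c))"
proof -
  obtain X where "X \<in> su" "cmat_exp X = Q" "(frob_norm X)^2 \<le> delta_formula CARD('n)"
    and eq: "(frob_norm X)^2 = delta_formula CARD('n) \<Longrightarrow>
       \<exists>c\<in>extremal_shifts CARD('n). Q = mat (cis (pi - c))"
    using exists_log_frob_norm_sq_le_delta_formula[OF assms] by blast
  moreover from this have "m_SU Q \<le> (frob_norm X)^2"
    by (intro m_SU_le)
  ultimately show "m_SU Q \<le> delta_formula CARD('n)"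
    and "m_SU Q = delta_formula CARD('n) \<Longrightarrow> \<exists>c\<in>extremal_shifts CARD('n). Q = mat (cis (pi - c))"
    by auto
qed

lemma m_SU_extremal_scalar:
  assumes "2 \<le> CARD('n)" "c \<in> extremal_shifts CARD('n)"
  shows "m_SU (mat (cis (pi - c)) :: complex^'n^'n) = delta_formula CARD('n)"
proof -
  have SU: "(mat (cis (pi - c)) :: complex^'n^'n) \<in> SU"
    using cis_extremal_shift_power[OF assms(2)] by (rule scalar_mat_in_SU)
  obtain X :: "complex^'n^'n" where "X \<in> su" "cmat_exp X = mat (cis (pi - c))"
    using exists_log_frob_norm_sq_le_delta_formula[OF assms(1) SU] by blast
  then have "delta_formula CARD('n) \<le> m_SU (mat (cis (pi - c)) :: complex^'n^'n)"
    using frob_norm_sq_ge_if_exp_eq_scalar delta_formula_eq[OF assms(2)] by (intro m_SU_ge) auto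
  then show ?thesis
    using m_SU_le_delta_formula(1)[OF assms(1) SU] by linarith
qed

lemma delta_SU_eq_delta_formula:
  assumes "2 \<le> CARD('n::finite)"
  shows "delta_SU TYPE('n) = delta_formula CARD('n)"
proof -
  define c where "c = (if even CARD('n) then 0 else pi / real CARD('n))"
  have c: "c \<in> extremal_shifts CARD('n)"
    by (simp add: c_def extremal_shifts_def)
  show ?thesis
    unfolding delta_SU_def
  proof (rule cSup_eq_maximum)
    show "delta_formula CARD('n) \<in> {m_SU Q |Q :: complex^'n^'n. Q \<in> SU}"
      using m_SU_extremal_scalar[OF assms c] scalar_mat_in_SU[OF cis_extremal_shift_power[OF c]]
      by (metis (mono_tags, lifting) mem_Collect_eq)
  qed (use m_SU_le_delta_formula(1)[OF assms] in blast)
qed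

lemma extremal_scalar_iff:
  "(if even CARD('n) then Q = - mat 1
    else Q = mat (exp (complex_of_real ((real CARD('n) - 1) * pi / real CARD('n)) * \<i>))
       \<or> Q = mat (exp (- complex_of_real ((real CARD('n) - 1) * pi / real CARD('n)) * \<i>)))
   \<longleftrightarrow> (\<exists>c\<in>extremal_shifts CARD('n). Q = (mat (cis (pi - c)) :: complex^'n^'n))"
proof -
  define n where "n = real CARD('n)"
  have "exp (complex_of_real ((n - 1) * pi / n) * \<i>) = cis ((n - 1) * pi / n)"
    and "exp (- complex_of_real ((n - 1) * pi / n) * \<i>) = cis (- ((n - 1) * pi / n))"
    by (simp_all add: cis_conv_exp mult.commute)
  moreover have "cis ((n - 1) * pi / n) = cis (pi - pi / n)"
    by (rule arg_cong[of _ _ cis]) (simp add: n_def field_simps)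
  moreover have "cis (- ((n - 1) * pi / n)) = cis ((pi + pi / n) - 2 * pi * of_int 1)"
    by (rule arg_cong[of _ _ cis]) (simp add: n_def field_simps)
  then have "cis (- ((n - 1) * pi / n)) = cis (pi - - (pi / n))"
    by (simp only: cis_diff_int_multiple_2pi) simp
  moreover have "- mat 1 = (mat (cis (pi - 0)) :: complex^'n^'n)"
    by (simp add: vec_eq_iff mat_def)
  ultimately show ?thesis
    by (auto simp: extremal_shifts_def n_def)
qed

theorem proposition4p1:
  assumes "CARD('n::finite) \<ge> 2"
  shows "(even CARD('n) \<longrightarrow> delta_SU TYPE('n) = real CARD('n) * pi^2)
       \<and> (odd CARD('n) \<longrightarrow> delta_SU TYPE('n) = (real CARD('n) - 1 / real CARD('n)) * pi^2)
       \<and> (\<forall>Q :: complex^'n^'n. Q \<in> SU \<longrightarrow>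
            (m_SU Q = delta_SU TYPE('n) \<longleftrightarrow>
              (if even CARD('n) then Q = - mat 1
               else Q = mat (exp (complex_of_real ((real CARD('n) - 1) * pi / real CARD('n)) * \<i>))
                  \<or> Q = mat (exp (- complex_of_real ((real CARD('n) - 1) * pi / real CARD('n)) * \<i>)))))"
proof -
  have delta: "delta_SU TYPE('n) = delta_formula CARD('n)"
    using assms by (rule delta_SU_eq_delta_formula)
  have "m_SU Q = delta_formula CARD('n) \<longleftrightarrow> (\<exists>c\<in>extremal_shifts CARD('n). Q = mat (cis (pi - c)))"
    if "Q \<in> SU" for Q :: "complex^'n^'n"
    using m_SU_le_delta_formula(2)[OF assms that] m_SU_extremal_scalar[OF assms] by blast
  then show ?thesis
    unfolding delta extremal_scalar_iff by (simp add: delta_formula_def)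
qed

end
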